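(* Let $\pi$ be a $\mathtt{TPDL}$ program and $\Gamma,\Delta,\Pi,\Sigma$ finite sets of $\mathtt{TPDL}$ formulas. Then $\Gamma\Rightarrow\Delta,[\pi]^{\leftarrow}\chi(\Pi\Rightarrow\Sigma)$ is provable in $\mathtt{GTPDL}$ if and only if $\Pi\Rightarrow\Sigma,[\pi]\chi(\Gamma\Rightarrow\Delta)$ is provable in $\mathtt{GTPDL}$.
   Context: $\mathtt{TPDL}$ formulas/programs over sets $\mathsf{Prop}$, $\mathsf{AtProg}$: $\varphi ::= \bot \mid p \mid (\varphi\to\varphi) \mid [\pi]\varphi \mid [\pi]^{\leftarrow}\varphi$, $\pi ::= \alpha \mid \pi;\pi \mid \pi\cup\pi \mid \pi^{*} \mid \varphi?$. Abbreviations: $\neg\varphi:=\varphi\to\bot$, $\varphi\lor\psi:=(\varphi\to\bot)\to\psi$, $\varphi\land\psi:=(\varphi\to(\psi\to\bot))\to\bot$. For a finite set $\Lambda=\{\varphi_0,\dots,\varphi_n\}$ (in a fixed enumeration), $\bigwedge\Lambda=(\cdots(\varphi_0\land\varphi_1)\land\cdots\land\varphi_n)$, $\bigvee\Lambda=(\cdots(\varphi_0\lor\varphi_1)\lor\cdots\lor\varphi_n)$, $\bigwedge\emptyset=\bot\to\bot$, $\bigvee\emptyset=\bot$. For a sequent, $\chi(\Gamma\Rightarrow\Delta):=\bigwedge\Gamma\to\bigvee\Delta$. $[\pi]\Gamma=\{[\pi]\varphi:\varphi\in\Gamma\}$, similarly $[\pi]^{\leftarrow}\Gamma$. A sequent is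 a pair of finite sets of formulas. $\mathtt{GTPDL}$ rules (premises / conclusion): (Ax) / $\Gamma\Rightarrow\Delta$, $\Gamma\cap\Delta\neq\emptyset$; ($\bot$) / $\Gamma,\bot\Rightarrow\Delta$; ($\to$L) $\Gamma\Rightarrow\varphi,\Delta$ and $\Gamma,\psi\Rightarrow\Delta$ / $\Gamma,\varphi\to\psi\Rightarrow\Delta$; ($\to$R) $\Gamma,\varphi\Rightarrow\psi,\Delta$ / $\Gamma\Rightarrow\varphi\to\psi,\Delta$; (Wk) $\Gamma\Rightarrow\Delta$ / $\Gamma'\Rightarrow\Delta'$, $\Gamma\subseteq\Gamma'$, $\Delta\subseteq\Delta'$; (Cut) $\Gamma\Rightarrow\varphi,\Delta$ and $\Gamma,\varphi\Rightarrow\Delta$ / $\Gamma\Rightarrow\Delta$; ($[\,]$) $\Gamma\Rightarrow\varphi,[\pi]^{\leftarrow}\Delta$ / $[\pi]\Gamma\Rightarrow[\pi]\varphi,\Delta$; ($[\,]^{\leftarrow}$) $\Gamma\Rightarrow\varphi,[\pi]\Delta$ / $[\pi]^{\leftarrow}\Gamma\Rightarrow[\pi]^{\leftarrow}\varphi,\Delta$; ($[;]$L) $\Gamma,[\pi_0][\pi_1]\varphi\Rightarrow\Delta$ / $\Gamma,[\pi_0;\pi_1]\varphi\Rightarrow\Delta$; ($[;]$R) $\Gamma\Rightarrow[\pi_0][\pi_1]\varphi,\Delta$ / $\Gamma\Rightarrow[\pi_0;\pi_1]\varphi,\Delta$; ($[\cup]$L) $\Gamma,[\pi_0]\varphi,[\pi_1]\varphi\Rightarrow\Delta$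 / $\Gamma,[\pi_0\cup\pi_1]\varphi\Rightarrow\Delta$; ($[\cup]$R) $\Gamma\Rightarrow\Delta,[\pi_0]\varphi$ and $\Gamma\Rightarrow\Delta,[\pi_1]\varphi$ / $\Gamma\Rightarrow[\pi_0\cup\pi_1]\varphi,\Delta$; ($[*]$L) $\Gamma,\varphi,[\pi][\pi^*]\varphi\Rightarrow\Delta$ / $\Gamma,[\pi^*]\varphi\Rightarrow\Delta$; ($[*]$R) $\Gamma,\varphi\Rightarrow[\pi]\varphi$ / $[\pi^*]\Gamma,\varphi\Rightarrow[\pi^*]\varphi$; ($[?]$L) $\Gamma\Rightarrow\varphi,\Delta$ and $\Gamma,\psi\Rightarrow\Delta$ / $\Gamma,[\varphi?]\psi\Rightarrow\Delta$; ($[?]$R) $\Gamma,\varphi\Rightarrow\psi,\Delta$ / $\Gamma\Rightarrow[\varphi?]\psi,\Delta$. A $\mathtt{GTPDL}$ proof is a finite tree of sequents, each node the conclusion of a rule instance whose premises are its children (leaves are Ax/$\bot$ instances). *)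

theory Defs
  imports Main "HOL-Library.FSet"
begin

datatype ('p, 'a) fm =
    Bot
  | Atom 'p
  | Imp "('p, 'a) fm" "('p, 'a) fm"
  | Box "('p, 'a) prog" "('p, 'a) fm"
  | BoxC "('p, 'a) prog" "('p, 'a) fm"   (* converse box [pi]^{<-} *)
and ('p, 'a) prog =
    At 'a
  | Seq "('p, 'a) prog" "('p, 'a) prog"
  | Choice "('p, 'a) prog" "('p, 'a) prog"
  | Star "('p, 'a) prog"
  | Test "('p, 'a) fm"

definition Neg :: "('p,'a) fm \<Rightarrow> ('p,'a) fm" where
  "Neg \<phi> = Imp \<phi> Bot"
definition Or :: "('p,'a) fm \<Rightarrow> ('p,'a) fm \<Rightarrow> ('p,'a) fm" where
  "Or \<phi> \<psi> = Imp (Imp \<phi> Bot) \<psi>"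
definition And :: "('p,'a) fm \<Rightarrow> ('p,'a) fm \<Rightarrow> ('p,'a) fm" where
  "And \<phi> \<psi> = Imp (Imp \<phi> (Imp \<psi> Bot)) Bot"

definition enum :: "('p,'a) fm fset \<Rightarrow> ('p,'a) fm list" where
  "enum A = (SOME xs. fset_of_list xs = A \<and> distinct xs)"

fun bigAnd_list :: "('p,'a) fm list \<Rightarrow> ('p,'a) fm" where
  "bigAnd_list [] = Imp Bot Bot"
| "bigAnd_list (x # xs) = foldl And x xs"

fun bigOr_list :: "('p,'a) fm list \<Rightarrow> ('p,'a) fm" where
  "bigOr_list [] = Bot"
| "bigOr_list (x # xs) = foldl Or x xs"

definition bigAnd :: "('p,'a) fm fset \<Rightarrow> ('p,'a) fm" where
  "bigAnd A = bigAnd_list (enum A)"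
definition bigOr :: "('p,'a) fm fset \<Rightarrow> ('p,'a) fm" where
  "bigOr A = bigOr_list (enum A)"

definition chi :: "('p,'a) fm fset \<Rightarrow> ('p,'a) fm fset \<Rightarrow> ('p,'a) fm" where
  "chi \<Gamma> \<Delta> = Imp (bigAnd \<Gamma>) (bigOr \<Delta>)"

inductive gtpdl :: "('p,'a) fm fset \<Rightarrow> ('p,'a) fm fset \<Rightarrow> bool" where
  Ax: "\<Gamma> |\<inter>| \<Delta> \<noteq> {||} \<Longrightarrow> gtpdl \<Gamma> \<Delta>"
| BotL: "gtpdl (finsert Bot \<Gamma>) \<Delta>"
| ImpL: "gtpdl \<Gamma> (finsert \<phi> \<Delta>) \<Longrightarrow> gtpdl (finsert \<psi> \<Gamma>) \<Delta>
         \<Longrightarrow> gtpdl (finsert (Imp \<phi> \<psi>) \<Gamma>) \<Delta>"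
| ImpR: "gtpdl (finsert \<phi> \<Gamma>) (finsert \<psi> \<Delta>) \<Longrightarrow> gtpdl \<Gamma> (finsert (Imp \<phi> \<psi>) \<Delta>)"
| Wk: "gtpdl \<Gamma> \<Delta> \<Longrightarrow> \<Gamma> |\<subseteq>| \<Gamma>' \<Longrightarrow> \<Delta> |\<subseteq>| \<Delta>' \<Longrightarrow> gtpdl \<Gamma>' \<Delta>'"
| Cut: "gtpdl \<Gamma> (finsert \<phi> \<Delta>) \<Longrightarrow> gtpdl (finsert \<phi> \<Gamma>) \<Delta> \<Longrightarrow> gtpdl \<Gamma> \<Delta>"
| BoxRule: "gtpdl \<Gamma> (finsert \<phi> (BoxC \<pi> |`| \<Delta>))
         \<Longrightarrow> gtpdl (Box \<pi> |`| \<Gamma>) (finsert (Box \<pi> \<phi>) \<Delta>)"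
| BoxCRule: "gtpdl \<Gamma> (finsert \<phi> (Box \<pi> |`| \<Delta>))
         \<Longrightarrow> gtpdl (BoxC \<pi> |`| \<Gamma>) (finsert (BoxC \<pi> \<phi>) \<Delta>)"
| SeqL: "gtpdl (finsert (Box \<pi>0 (Box \<pi>1 \<phi>)) \<Gamma>) \<Delta>
         \<Longrightarrow> gtpdl (finsert (Box (Seq \<pi>0 \<pi>1) \<phi>) \<Gamma>) \<Delta>"
| SeqR: "gtpdl \<Gamma> (finsert (Box \<pi>0 (Box \<pi>1 \<phi>)) \<Delta>)
         \<Longrightarrow> gtpdl \<Gamma> (finsert (Box (Seq \<pi>0 \<pi>1) \<phi>) \<Delta>)"
| ChoiceL: "gtpdl (finsert (Box \<pi>0 \<phi>) (finsert (Box \<pi>1 \<phi>) \<Gamma>)) \<Delta>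
         \<Longrightarrow> gtpdl (finsert (Box (Choice \<pi>0 \<pi>1) \<phi>) \<Gamma>) \<Delta>"
| ChoiceR: "gtpdl \<Gamma> (finsert (Box \<pi>0 \<phi>) \<Delta>) \<Longrightarrow> gtpdl \<Gamma> (finsert (Box \<pi>1 \<phi>) \<Delta>)
         \<Longrightarrow> gtpdl \<Gamma> (finsert (Box (Choice \<pi>0 \<pi>1) \<phi>) \<Delta>)"
| StarL: "gtpdl (finsert \<phi> (finsert (Box \<pi> (Box (Star \<pi>) \<phi>)) \<Gamma>)) \<Delta>
         \<Longrightarrow> gtpdl (finsert (Box (Star \<pi>) \<phi>) \<Gamma>) \<Delta>"
| StarR: "gtpdl (finsert \<phi> \<Gamma>) {|Box \<pi> \<phi>|}
         \<Longrightarrow> gtpdl (finsert \<phi> (Box (Star \<pi>) |`| \<Gamma>)) {|Box (Star \<pi>) \<phi>|}"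
| TestL: "gtpdl \<Gamma> (finsert \<phi> \<Delta>) \<Longrightarrow> gtpdl (finsert \<psi> \<Gamma>) \<Delta>
         \<Longrightarrow> gtpdl (finsert (Box (Test \<phi>) \<psi>) \<Gamma>) \<Delta>"
| TestR: "gtpdl (finsert \<phi> \<Gamma>) (finsert \<psi> \<Delta>)
         \<Longrightarrow> gtpdl \<Gamma> (finsert (Box (Test \<phi>) \<psi>) \<Delta>)"

end

theory Submission
  imports Defs
begin

text \<open>
  The formula \<open>chi \<Gamma> \<Delta>\<close> internalises the sequent \<open>\<Gamma> \<Rightarrow> \<Delta>\<close>: with cut,
  \<open>\<Gamma> \<Rightarrow> \<Delta>, C\<close> is derivable iff \<open>\<Rightarrow> chi \<Gamma> \<Delta>, C\<close> is, and \<open>chi \<Gamma> \<Delta>, \<Gamma> \<Rightarrow> \<Delta>\<close>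
  always holds. For empty antecedents the rules for \<open>[\<pi>]\<close> and \<open>[\<pi>]\<^sup>\<leftarrow>\<close> say that
  \<open>\<Rightarrow> \<phi>, [\<pi>]\<^sup>\<leftarrow>\<psi>\<close> and \<open>\<Rightarrow> [\<pi>]\<phi>, \<psi>\<close> are interderivable. So from
  \<open>\<Gamma> \<Rightarrow> \<Delta>, [\<pi>]\<^sup>\<leftarrow>chi \<Pi> \<Sigma>\<close> we get \<open>\<Rightarrow> [\<pi>]chi \<Gamma> \<Delta>, chi \<Pi> \<Sigma>\<close>, and a cut on
  \<open>chi \<Pi> \<Sigma>\<close> yields \<open>\<Pi> \<Rightarrow> \<Sigma>, [\<pi>]chi \<Gamma> \<Delta>\<close>; the converse is symmetric.
\<close>

lemma gtpdl_ax: "\<phi> |\<in>| \<Gamma> \<Longrightarrow> \<phi> |\<in>| \<Delta> \<Longrightarrow> gtpdl \<Gamma> \<Delta>"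
  by (rule Ax) auto

lemma gtpdl_BotL_mem: "Bot |\<in>| \<Gamma> \<Longrightarrow> gtpdl \<Gamma> \<Delta>"
  using BotL[of \<Gamma> \<Delta>] by (simp add: finsert_absorb)

lemma gtpdl_ImpL_mem:
  "Imp \<phi> \<psi> |\<in>| \<Gamma> \<Longrightarrow> gtpdl \<Gamma> (finsert \<phi> \<Delta>) \<Longrightarrow> gtpdl (finsert \<psi> \<Gamma>) \<Delta> \<Longrightarrow> gtpdl \<Gamma> \<Delta>"
  using ImpL[of \<Gamma> \<phi> \<Delta> \<psi>] by (simp add: finsert_absorb)

lemma gtpdl_ImpR_mem:
  "Imp \<phi> \<psi> |\<in>| \<Delta> \<Longrightarrow> gtpdl (finsert \<phi> \<Gamma>) (finsert \<psi> \<Delta>) \<Longrightarrow> gtpdl \<Gamma> \<Delta>"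
  using ImpR[of \<phi> \<Gamma> \<psi> \<Delta>] by (simp add: finsert_absorb)

lemma gtpdl_trans: "gtpdl {|\<phi>|} {|\<psi>|} \<Longrightarrow> gtpdl {|\<psi>|} {|\<chi>|} \<Longrightarrow> gtpdl {|\<phi>|} {|\<chi>|}"
  by (rule Cut[of _ \<psi>]) (auto elim: Wk)

lemma Cut_fset_left:
  assumes "gtpdl (\<Gamma> |\<union>| X) \<Delta>" and "\<And>\<phi>. \<phi> |\<in>| X \<Longrightarrow> gtpdl \<Gamma> (finsert \<phi> \<Delta>)"
  shows "gtpdl \<Gamma> \<Delta>"
  using assms
proof (induction X arbitrary: \<Gamma>)
  case (insert \<phi> X)
  have "gtpdl (finsert \<phi> \<Gamma>) \<Delta>"
  proof (rule insert.IH)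
    show "gtpdl (finsert \<phi> \<Gamma> |\<union>| X) \<Delta>"
      using insert.prems(1) by simp
    show "gtpdl (finsert \<phi> \<Gamma>) (finsert \<psi> \<Delta>)" if "\<psi> |\<in>| X" for \<psi>
    proof -
      have "gtpdl \<Gamma> (finsert \<psi> \<Delta>)"
        using that insert.prems(2) by simp
      then show ?thesis by (rule Wk) auto
    qed
  qed
  with insert.prems(2) show ?case by (meson Cut finsertI1)
qed simp

lemma Cut_fset_right:
  assumes "gtpdl \<Gamma> (\<Delta> |\<union>| X)" and "\<And>\<phi>. \<phi> |\<in>| X \<Longrightarrow> gtpdl (finsert \<phi> \<Gamma>) \<Delta>"
  shows "gtpdl \<Gamma> \<Delta>"
  using assms
proof (induction X arbitrary: \<Delta>)
  case (insert \<phi> X)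
  have "gtpdl \<Gamma> (finsert \<phi> \<Delta>)"
  proof (rule insert.IH)
    show "gtpdl \<Gamma> (finsert \<phi> \<Delta> |\<union>| X)"
      using insert.prems(1) by simp
    show "gtpdl (finsert \<psi> \<Gamma>) (finsert \<phi> \<Delta>)" if "\<psi> |\<in>| X" for \<psi>
    proof -
      have "gtpdl (finsert \<psi> \<Gamma>) \<Delta>"
        using that insert.prems(2) by simp
      then show ?thesis by (rule Wk) auto
    qed
  qed
  with insert.prems(2) show ?case by (meson Cut finsertI1)
qed simp

lemma And_elim1: "gtpdl {|And \<phi> \<psi>|} {|\<phi>|}"
  unfolding And_def
  by (rule gtpdl_ImpL_mem[of "Imp \<phi> (Imp \<psi> Bot)" Bot], simp, rule gtpdl_ImpR_mem[of \<phi> "Imp \<psi> Bot"])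
    (auto intro: gtpdl_ax gtpdl_BotL_mem)

lemma And_elim2: "gtpdl {|And \<phi> \<psi>|} {|\<psi>|}"
  unfolding And_def
  by (rule gtpdl_ImpL_mem[of "Imp \<phi> (Imp \<psi> Bot)" Bot], simp, rule gtpdl_ImpR_mem[of \<phi> "Imp \<psi> Bot"],
      simp, rule gtpdl_ImpR_mem[of \<psi> Bot])
    (auto intro: gtpdl_ax gtpdl_BotL_mem)

lemma And_intro: "gtpdl {|\<phi>, \<psi>|} {|And \<phi> \<psi>|}"
  unfolding And_def
  by (rule gtpdl_ImpR_mem[of "Imp \<phi> (Imp \<psi> Bot)" Bot], simp, rule gtpdl_ImpL_mem[of \<phi> "Imp \<psi> Bot"],
      simp, rule gtpdl_ax[of \<phi>], simp, simp, rule gtpdl_ImpL_mem[of \<psi> Bot])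
    (auto intro: gtpdl_ax gtpdl_BotL_mem)

lemma Or_intro1: "gtpdl {|\<phi>|} {|Or \<phi> \<psi>|}"
  unfolding Or_def
  by (rule gtpdl_ImpR_mem[of "Imp \<phi> Bot" \<psi>], simp, rule gtpdl_ImpL_mem[of \<phi> Bot])
    (auto intro: gtpdl_ax gtpdl_BotL_mem)

lemma Or_intro2: "gtpdl {|\<psi>|} {|Or \<phi> \<psi>|}"
  unfolding Or_def
  by (rule gtpdl_ImpR_mem[of "Imp \<phi> Bot" \<psi>]) (auto intro: gtpdl_ax)

lemma Or_elim: "gtpdl {|Or \<phi> \<psi>|} {|\<phi>, \<psi>|}"
  unfolding Or_def
  by (rule gtpdl_ImpL_mem[of "Imp \<phi> Bot" \<psi>], simp, rule gtpdl_ImpR_mem[of \<phi> Bot])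
    (auto intro: gtpdl_ax)

lemma foldl_And_elim: "\<phi> \<in> set (\<psi> # \<psi>s) \<Longrightarrow> gtpdl {|foldl And \<psi> \<psi>s|} {|\<phi>|}"
proof (induction \<psi>s arbitrary: \<psi> \<phi>)
  case Nil
  then show ?case by (auto intro: gtpdl_ax)
next
  case (Cons \<chi> \<psi>s)
  show ?case
  proof (cases "\<phi> \<in> set \<psi>s")
    case True
    then show ?thesis using Cons.IH by simp
  next
    case False
    with Cons.prems have "\<phi> = \<psi> \<or> \<phi> = \<chi>" by auto
    moreover have "gtpdl {|foldl And \<psi> (\<chi> # \<psi>s)|} {|And \<psi> \<chi>|}"
      by (simp add: Cons.IH)
    ultimately show ?thesis using gtpdl_trans And_elim1 And_elim2 by blast
  qed
qed

lemma foldl_And_intro: "gtpdl (fset_of_list (\<psi> # \<psi>s)) {|foldl And \<psi> \<psi>s|}"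
proof (induction \<psi>s arbitrary: \<psi>)
  case Nil
  then show ?case by (auto intro: gtpdl_ax)
next
  case (Cons \<chi> \<psi>s)
  have "gtpdl (finsert \<psi> (finsert \<chi> (fset_of_list \<psi>s))) (finsert (And \<psi> \<chi>) {|foldl And (And \<psi> \<chi>) \<psi>s|})"
    using And_intro[of \<psi> \<chi>] by (rule Wk) auto
  moreover have "gtpdl (finsert (And \<psi> \<chi>) (finsert \<psi> (finsert \<chi> (fset_of_list \<psi>s)))) {|foldl And (And \<psi> \<chi>) \<psi>s|}"
    using Cons.IH by (rule Wk) auto
  ultimately have "gtpdl (finsert \<psi> (finsert \<chi> (fset_of_list \<psi>s))) {|foldl And (And \<psi> \<chi>) \<psi>s|}"
    by (rule Cut)
  then show ?case by simp
qed

lemma foldl_Or_intro: "\<phi> \<in> set (\<psi> # \<psi>s) \<Longrightarrow> gtpdl {|\<phi>|} {|foldl Or \<psi> \<psi>s|}"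
proof (induction \<psi>s arbitrary: \<psi> \<phi>)
  case Nil
  then show ?case by (auto intro: gtpdl_ax)
next
  case (Cons \<chi> \<psi>s)
  show ?case
  proof (cases "\<phi> \<in> set \<psi>s")
    case True
    then show ?thesis using Cons.IH by simp
  next
    case False
    with Cons.prems have "\<phi> = \<psi> \<or> \<phi> = \<chi>" by auto
    moreover have "gtpdl {|Or \<psi> \<chi>|} {|foldl Or \<psi> (\<chi> # \<psi>s)|}"
      by (simp add: Cons.IH)
    ultimately show ?thesis using gtpdl_trans Or_intro1 Or_intro2 by blast
  qed
qed

lemma foldl_Or_elim: "gtpdl {|foldl Or \<psi> \<psi>s|} (fset_of_list (\<psi> # \<psi>s))"
proof (induction \<psi>s arbitrary: \<psi>)
  case Nil
  then show ?case by (auto intro: gtpdl_ax)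
next
  case (Cons \<chi> \<psi>s)
  have "gtpdl {|foldl Or (Or \<psi> \<chi>) \<psi>s|} (finsert (Or \<psi> \<chi>) (finsert \<psi> (finsert \<chi> (fset_of_list \<psi>s))))"
    using Cons.IH by (rule Wk) auto
  moreover have "gtpdl (finsert (Or \<psi> \<chi>) {|foldl Or (Or \<psi> \<chi>) \<psi>s|}) (finsert \<psi> (finsert \<chi> (fset_of_list \<psi>s)))"
    using Or_elim[of \<psi> \<chi>] by (rule Wk) auto
  ultimately have "gtpdl {|foldl Or (Or \<psi> \<chi>) \<psi>s|} (finsert \<psi> (finsert \<chi> (fset_of_list \<psi>s)))"
    by (rule Cut)
  then show ?case by simp
qed

lemma fset_of_list_enum: "fset_of_list (enum A) = A"
proof -
  obtain xs where "set xs = fset A" "distinct xs"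
    using finite_distinct_list[of "fset A"] by auto
  then have "fset_of_list xs = A \<and> distinct xs"
    by (metis fset_inverse fset_of_list.abs_eq)
  then show ?thesis
    unfolding enum_def by (rule someI2) auto
qed

lemma bigAnd_elim: "\<phi> |\<in>| A \<Longrightarrow> gtpdl {|bigAnd A|} {|\<phi>|}"
  unfolding bigAnd_def using fset_of_list_enum[of A] foldl_And_elim
  by (cases "enum A") (auto simp: fset_of_list_elem)

lemma bigAnd_intro: "gtpdl A {|bigAnd A|}"
proof (cases "enum A")
  case Nil
  have "gtpdl A {|Imp Bot Bot|}"
    by (rule gtpdl_ImpR_mem[of Bot Bot]) (auto intro: gtpdl_ax)
  with Nil show ?thesis by (simp add: bigAnd_def)
next
  case (Cons \<psi> \<psi>s)
  then show ?thesis
    using foldl_And_intro[of \<psi> \<psi>s] fset_of_list_enum[of A] by (simp add: bigAnd_def)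
qed

lemma bigOr_intro: "\<phi> |\<in>| A \<Longrightarrow> gtpdl {|\<phi>|} {|bigOr A|}"
  unfolding bigOr_def using fset_of_list_enum[of A] foldl_Or_intro
  by (cases "enum A") (auto simp: fset_of_list_elem)

lemma bigOr_elim: "gtpdl {|bigOr A|} A"
proof (cases "enum A")
  case Nil
  then show ?thesis by (simp add: bigOr_def gtpdl_BotL_mem)
next
  case (Cons \<psi> \<psi>s)
  then show ?thesis
    using foldl_Or_elim[of \<psi> \<psi>s] fset_of_list_enum[of A] by (simp add: bigOr_def)
qed

lemma bigAnd_left:
  assumes "gtpdl (A |\<union>| \<Gamma>) \<Delta>"
  shows "gtpdl (finsert (bigAnd A) \<Gamma>) \<Delta>"
proof (rule Cut_fset_left[of _ A])
  show "gtpdl (finsert (bigAnd A) \<Gamma> |\<union>| A) \<Delta>"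
    using assms by (rule Wk) auto
  show "gtpdl (finsert (bigAnd A) \<Gamma>) (finsert \<phi> \<Delta>)" if "\<phi> |\<in>| A" for \<phi>
    using bigAnd_elim[OF that] by (rule Wk) auto
qed

lemma bigOr_right:
  assumes "gtpdl \<Gamma> (A |\<union>| \<Delta>)"
  shows "gtpdl \<Gamma> (finsert (bigOr A) \<Delta>)"
proof (rule Cut_fset_right[of _ _ A])
  show "gtpdl \<Gamma> (finsert (bigOr A) \<Delta> |\<union>| A)"
    using assms by (rule Wk) auto
  show "gtpdl (finsert \<phi> \<Gamma>) (finsert (bigOr A) \<Delta>)" if "\<phi> |\<in>| A" for \<phi>
    using bigOr_intro[OF that] by (rule Wk) auto
qed

lemma chi_elim: "gtpdl (finsert (chi \<Gamma> \<Delta>) \<Gamma>) \<Delta>"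
  unfolding chi_def
proof (rule ImpL)
  show "gtpdl \<Gamma> (finsert (bigAnd \<Gamma>) \<Delta>)"
    using bigAnd_intro[of \<Gamma>] by (rule Wk) auto
  show "gtpdl (finsert (bigOr \<Delta>) \<Gamma>) \<Delta>"
    using bigOr_elim[of \<Delta>] by (rule Wk) auto
qed

lemma chi_intro:
  assumes "gtpdl \<Gamma> (finsert \<psi> \<Delta>)"
  shows "gtpdl {||} {|chi \<Gamma> \<Delta>, \<psi>|}"
proof -
  have "gtpdl (\<Gamma> |\<union>| {||}) (\<Delta> |\<union>| {|\<psi>|})"
    using assms by (rule Wk) auto
  then have "gtpdl {|bigAnd \<Gamma>|} {|bigOr \<Delta>, \<psi>|}"
    by (intro bigAnd_left bigOr_right) simp
  then show ?thesis
    unfolding chi_def by (rule ImpR)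
qed

lemma Box_residual: "gtpdl {||} {|\<phi>, BoxC \<pi> \<psi>|} \<Longrightarrow> gtpdl {||} {|Box \<pi> \<phi>, \<psi>|}"
  using BoxRule[of "{||}" \<phi> \<pi> "{|\<psi>|}"] by simp

lemma BoxC_residual: "gtpdl {||} {|\<phi>, Box \<pi> \<psi>|} \<Longrightarrow> gtpdl {||} {|BoxC \<pi> \<phi>, \<psi>|}"
  using BoxCRule[of "{||}" \<phi> \<pi> "{|\<psi>|}"] by simp

lemma chi_residual_transfer:
  assumes residual: "\<And>\<phi> \<psi>. gtpdl {||} {|\<phi>, M' \<psi>|} \<Longrightarrow> gtpdl {||} {|M \<phi>, \<psi>|}"
    and derivable: "gtpdl \<Gamma> (finsert (M' (chi \<Pi> \<Sigma>)) \<Delta>)"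
  shows "gtpdl \<Pi> (finsert (M (chi \<Gamma> \<Delta>)) \<Sigma>)"
proof (rule Cut[of _ "chi \<Pi> \<Sigma>"])
  have "gtpdl {||} {|chi \<Gamma> \<Delta>, M' (chi \<Pi> \<Sigma>)|}"
    using derivable by (rule chi_intro)
  then have "gtpdl {||} {|M (chi \<Gamma> \<Delta>), chi \<Pi> \<Sigma>|}"
    by (rule residual)
  then show "gtpdl \<Pi> (finsert (chi \<Pi> \<Sigma>) (finsert (M (chi \<Gamma> \<Delta>)) \<Sigma>))"
    by (rule Wk) auto
  show "gtpdl (finsert (chi \<Pi> \<Sigma>) \<Pi>) (finsert (M (chi \<Gamma> \<Delta>)) \<Sigma>)"
    using chi_elim[of \<Pi> \<Sigma>] by (rule Wk) auto
qed

theorem mainTheorem14: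
  fixes \<pi> :: "('p,'a) prog" and \<Gamma> \<Delta> \<Pi> \<Sigma> :: "('p,'a) fm fset"
  shows "gtpdl \<Gamma> (finsert (BoxC \<pi> (chi \<Pi> \<Sigma>)) \<Delta>)
     \<longleftrightarrow> gtpdl \<Pi> (finsert (Box \<pi> (chi \<Gamma> \<Delta>)) \<Sigma>)"
  using chi_residual_transfer[where M = "Box \<pi>" and M' = "BoxC \<pi>", OF Box_residual]
    chi_residual_transfer[where M = "BoxC \<pi>" and M' = "Box \<pi>", OF BoxC_residual]
  by blast

end
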